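(* Let $\mathtt{W}_1,\mathtt{W}_2,\mathtt{W}\in\mathcal{U}^{\ast,\circ}$. (i) If $\mathtt{W}_1=\mathbf{1}$, then $m_{\mathtt{W}_1,\mathtt{W}_2;\mathtt{W}}=\delta_{\mathtt{W}=\mathtt{W}_2}$. (ii) If $\mathtt{W}_2=\mathbf{1}$, then $m_{\mathtt{W}_1,\mathtt{W}_2;\mathtt{W}}=\delta_{\mathtt{W}=\mathtt{W}_1}$. (iii) If $\mathtt{W}=\mathbf{1}$, then $m_{\mathtt{W}_1,\mathtt{W}_2;\mathtt{W}}=\delta_{\mathtt{W}_1=\mathtt{W}_2=\mathbf{1}}$. (iv) If $\mathtt{W}_1,\mathtt{W}_2,\mathtt{W}\neq\mathbf{1}$, write $\mathtt{W}_1=\mathtt{W}_1'u_{j_1}u_0^{n_1}$, $\mathtt{W}_2=\mathtt{W}_2'u_{j_2}u_0^{n_2}$, $\mathtt{W}=\mathtt{W}'u_{j_3}u_0^{n_3}$ with uniquely determined $\mathtt{W}_1',\mathtt{W}_2',\mathtt{W}'\in\mathcal{U}^{\ast,\circ}$, $j_1,j_2,j_3\in\mathbb{Z}_{>0}$, $n_1,n_2,n_3\in\mathbb{Z}_{\ge0}$. Then \begin{align*} m_{\mathtt{W}_1,\mathtt{W}_2;\mathtt{W}} =& \sum_{\substack{0\le k\le j\le n_2\\ 0\le\varepsilon\le\min\{1,n_2-j\}}}\binom{n_1+k}{n_1}\binom{n_1}{j-k}\, m_{\mathtt{W}_1',\mathtt{W}_2'u_{j_2}u_0^{n_2-j-\varepsilon};\mathtt{W}'}\,\delta_{j_1=j_3}\,\delta_{n_1+k=n_3}\\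 &+\sum_{\substack{0\le k\le j\le n_1\\ 0\le\varepsilon\le\min\{1,n_1-j\}}}\binom{n_2+k}{n_2}\binom{n_2}{j-k}\, m_{\mathtt{W}_1'u_{j_1}u_0^{n_1-j-\varepsilon},\mathtt{W}_2';\mathtt{W}'}\,\delta_{j_2=j_3}\,\delta_{n_2+k=n_3}\\ &+\sum_{k=0}^{n_2}\binom{n_1+k}{n_1}\binom{n_1}{n_2-k}\, m_{\mathtt{W}_1',\mathtt{W}_2';\mathtt{W}'}\,\delta_{j_1+j_2=j_3}\,\delta_{n_1+k=n_3}. \end{align*}
   Context: Let $\mathcal{U}=\{u_j\mid j\in\mathbb{Z}_{\geq0}\}$ be an alphabet; $\mathcal{U}^\ast$ is the set of words (finite concatenations of letters, including the empty word $\mathbf{1}$), and $\mathbb{Q}\langle\mathcal{U}\rangle$ is the $\mathbb{Q}$-vector space with basis $\mathcal{U}^\ast$; $u_0^n$ denotes $n$ copies of $u_0$. The stuffle product $\ast$ on $\mathbb{Q}\langle\mathcal{U}\rangle$ is the $\mathbb{Q}$-bilinear product with $\mathbf{1}\ast\mathtt{W}=\mathtt{W}\ast\mathbf{1}=\mathtt{W}$ and $u_{j_1}\mathtt{W}_1\ast u_{j_2}\mathtt{W}_2 = u_{j_1}(\mathtt{W}_1\ast u_{j_2}\mathtt{W}_2)+u_{j_2}(u_{j_1}\mathtt{W}_1\ast\mathtt{W}_2)+u_{j_1+j_2}(\mathtt{W}_1\ast\mathtt{W}_2)$ for $j_1,j_2\in\mathbb{Z}_{\ge0}$ and words $\mathtt{W}_1,\mathtt{W}_2$.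 $\mathcal{U}^{\ast,\circ}$ is the set of words not starting with $u_0$ (including $\mathbf{1}$); its span is closed under $\ast$. For $\mathtt{W}_1,\mathtt{W}_2\in\mathcal{U}^{\ast,\circ}$, $m_{\mathtt{W}_1,\mathtt{W}_2;\mathtt{W}}\in\mathbb{Z}_{\ge0}$ is defined by $\mathtt{W}_1\ast\mathtt{W}_2=\sum_{\mathtt{W}\in\mathcal{U}^{\ast,\circ}}m_{\mathtt{W}_1,\mathtt{W}_2;\mathtt{W}}\mathtt{W}$. $\delta_{\bullet}$ is $1$ if the condition $\bullet$ holds and $0$ otherwise. Binomial coefficients $\binom{a}{b}$ with $b<0$ or $b>a$ are $0$. *)

theory Defs
  imports Main "HOL-Library.Multiset"
begin

text \<open>Words over the alphabet U = {u_j | j >= 0} are lists of naturals; the letter u_j is j.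
  The stuffle product of two words is a Z_{>=0}-linear combination of words, represented
  as a multiset of words (coefficient = multiplicity).\<close>

fun stuffle :: "nat list \<Rightarrow> nat list \<Rightarrow> nat list multiset" where
  "stuffle [] w = {#w#}"
| "stuffle (a # w1) [] = {#a # w1#}"
| "stuffle (a # w1) (b # w2) =
     image_mset ((#) a) (stuffle w1 (b # w2))
   + image_mset ((#) b) (stuffle (a # w1) w2)
   + image_mset ((#) (a + b)) (stuffle w1 w2)"

definition Ucirc :: "nat list set" where
  "Ucirc = {w. w = [] \<or> hd w \<noteq> 0}"

definition mcoef :: "nat list \<Rightarrow> nat list \<Rightarrow> nat list \<Rightarrow> nat" where
  "mcoef W1 W2 W = count (stuffle W1 W2) W"

end

(* Read words from the right: by stuffle_snoc_snoc, the last letter of a word in X u_x * Y u_y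
   is u_x, u_y or u_(x+y).  Fix the nonzero letters u_j1, u_j2, u_j3 and let the numbers a, b, n
   of trailing letters u_0 vary.  A trailing u_0 of the product only comes from trailing u_0's of
   the factors, so the coefficient of W' u_j3 u_0^n in W1' u_j1 u_0^a * W2' u_j2 u_0^b obeys, in
   (a, b, n), the same linear recurrence as the multiplicity of u_0^n in u_0^a * u_0^b.  Solutions
   of this recurrence are determined by their values at n = 0, and there u_j3 is u_j1 (possibly
   merged with the last u_0 of the other factor: this is the epsilon of the statement), u_j2, or
   u_(j1+j2).  The right-hand side of (iv), once its k-sums are collapsed to these multiplicities,
   solves the same recurrence with the same initial values. *)

theory Submission
  imports Defs
begin

lemma stuffle_Nil2 [simp]: "stuffle w [] = {#w#}"
  by (cases w) auto

lemma stuffle_snoc_snoc: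
  "stuffle (X @ [x]) (Y @ [y]) =
     image_mset (\<lambda>w. w @ [x]) (stuffle X (Y @ [y]))
   + image_mset (\<lambda>w. w @ [y]) (stuffle (X @ [x]) Y)
   + image_mset (\<lambda>w. w @ [x + y]) (stuffle X Y)"
proof (induction X Y rule: stuffle.induct)
  case (1 w)
  then show ?case
    by (induction w) (auto simp: image_mset.compositionality o_def add_ac)
next
  case (2 a w1)
  then show ?case
    by (induction w1 arbitrary: a) (auto simp: image_mset.compositionality o_def add_ac)
next
  case (3 a w1 b w2)
  then show ?case
    by (simp add: image_mset.compositionality o_def add_ac)
qed

lemma count_image_mset_snoc:
  "count (image_mset (\<lambda>w. w @ [x]) M) (V @ [z]) = of_bool (x = z) * count M V"
proof (cases "x = z")
  case True
  then show ?thesis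
    by (cases "V \<in># M") (auto simp: count_image_mset' Collect_conv_if2 not_in_iff)
next
  case False
  then show ?thesis
    by (auto simp: count_image_mset' intro!: sum.neutral)
qed

lemma mcoef_snoc_snoc:
  "mcoef (X @ [x]) (Y @ [y]) (V @ [z]) =
     of_bool (x = z) * mcoef X (Y @ [y]) V
   + of_bool (y = z) * mcoef (X @ [x]) Y V
   + of_bool (x + y = z) * mcoef X Y V"
  by (simp add: mcoef_def stuffle_snoc_snoc count_image_mset_snoc)

lemma count_stuffle_Nil: "count (stuffle X Y) [] = of_bool (X = [] \<and> Y = [])"
proof -
  have "[] \<in># stuffle X Y \<longleftrightarrow> X = [] \<and> Y = []"
    by (induction X Y rule: stuffle.induct) auto
  then show ?thesis
    by (auto simp: count_eq_zero_iff)
qed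

definition trailing_zero_recurrence :: "(nat \<Rightarrow> nat \<Rightarrow> nat \<Rightarrow> nat) \<Rightarrow> bool" where
  "trailing_zero_recurrence f \<longleftrightarrow> (\<forall>a b n. f a b (Suc n) =
       (if 0 < a then f (a - 1) b n else 0) + (if 0 < b then f a (b - 1) n else 0)
     + (if 0 < a \<and> 0 < b then f (a - 1) (b - 1) n else 0))"

lemma trailing_zero_recurrence_eqI:
  assumes "trailing_zero_recurrence f" and "trailing_zero_recurrence g"
    and "\<And>a b. f a b 0 = g a b 0"
  shows "f a b n = g a b n"
  using assms unfolding trailing_zero_recurrence_def by (induction n arbitrary: a b) simp_all

lemma trailing_zero_recurrence_add:
  "trailing_zero_recurrence f \<Longrightarrow> trailing_zero_recurrence g
    \<Longrightarrow> trailing_zero_recurrence (\<lambda>a b n. f a b n + g a b n)"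
  by (simp add: trailing_zero_recurrence_def)

lemma trailing_zero_recurrence_scale:
  "trailing_zero_recurrence f \<Longrightarrow> trailing_zero_recurrence (\<lambda>a b n. c * f a b n)"
  by (simp add: trailing_zero_recurrence_def distrib_left)

lemma trailing_zero_recurrence_swap:
  "trailing_zero_recurrence f \<Longrightarrow> trailing_zero_recurrence (\<lambda>a b n. f b a n)"
  by (auto simp: trailing_zero_recurrence_def)

lemma sum_atMost_shift_positive:
  fixes h :: "nat \<Rightarrow> nat \<Rightarrow> 'a::comm_monoid_add"
  shows "(\<Sum>r\<le>b. if 0 < r then h (r - 1) (b - r) else 0)
    = (if 0 < b then \<Sum>s\<le>b - 1. h s (b - 1 - s) else 0)"
  by (cases b) (simp_all del: sum.atMost_Suc add: sum.atMost_Suc_shift)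

lemma trailing_zero_recurrence_convolution:
  assumes "trailing_zero_recurrence f"
  shows "trailing_zero_recurrence (\<lambda>a b n. \<Sum>r\<le>b. f a r n * g (b - r))"
  unfolding trailing_zero_recurrence_def
proof (intro allI)
  fix a b n
  have "(\<Sum>r\<le>b. f a r (Suc n) * g (b - r))
      = (\<Sum>r\<le>b. (if 0 < a then f (a - 1) r n * g (b - r) else 0))
      + (\<Sum>r\<le>b. if 0 < r then f a (r - 1) n * g (b - r) else 0)
      + (\<Sum>r\<le>b. if 0 < r then (if 0 < a then f (a - 1) (r - 1) n * g (b - r) else 0) else 0)"
    using assms unfolding trailing_zero_recurrence_def
    by (auto simp: sum.distrib[symmetric] distrib_right intro!: sum.cong)
  also have "\<dots> = (if 0 < a then \<Sum>r\<le>b. f (a - 1) r n * g (b - r) else 0)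
      + (if 0 < b then \<Sum>s\<le>b - 1. f a s n * g (b - 1 - s) else 0)
      + (if 0 < a \<and> 0 < b then \<Sum>s\<le>b - 1. f (a - 1) s n * g (b - 1 - s) else 0)"
    by (simp only: sum_atMost_shift_positive[of "\<lambda>s t. f a s n * g t"]
        sum_atMost_shift_positive[of "\<lambda>s t. if 0 < a then f (a - 1) s n * g t else 0"]) simp
  finally show "(\<Sum>r\<le>b. f a r (Suc n) * g (b - r))
      = (if 0 < a then \<Sum>r\<le>b. f (a - 1) r n * g (b - r) else 0)
      + (if 0 < b then \<Sum>r\<le>b - 1. f a r n * g (b - 1 - r) else 0)
      + (if 0 < a \<and> 0 < b then \<Sum>r\<le>b - 1. f (a - 1) r n * g (b - 1 - r) else 0)" .
qed

lemma append_replicate_Suc: "Z @ replicate (Suc k) z = (Z @ replicate k z) @ [z]"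
  by (simp add: replicate_append_same)

lemma append_snoc_replicate_Suc: "Z @ [x] @ replicate (Suc k) z = (Z @ [x] @ replicate k z) @ [z]"
  by (simp add: replicate_append_same)

lemma trailing_zero_recurrence_mcoef:
  assumes "0 < x" and "0 < y"
  shows "trailing_zero_recurrence
    (\<lambda>a b n. mcoef (X @ [x] @ replicate a 0) (Y @ [y] @ replicate b 0) (V @ replicate n 0))"
  unfolding trailing_zero_recurrence_def
proof (intro allI)
  fix a b n
  show "mcoef (X @ [x] @ replicate a 0) (Y @ [y] @ replicate b 0) (V @ replicate (Suc n) 0) =
      (if 0 < a then mcoef (X @ [x] @ replicate (a - 1) 0) (Y @ [y] @ replicate b 0)
        (V @ replicate n 0) else 0)
    + (if 0 < b then mcoef (X @ [x] @ replicate a 0) (Y @ [y] @ replicate (b - 1) 0)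
        (V @ replicate n 0) else 0)
    + (if 0 < a \<and> 0 < b then mcoef (X @ [x] @ replicate (a - 1) 0) (Y @ [y] @ replicate (b - 1) 0)
        (V @ replicate n 0) else 0)"
    using assms
    by (cases a; cases b) (simp_all only: append_snoc_replicate_Suc append_replicate_Suc[of V]
        append_Nil2 replicate_0 mcoef_snoc_snoc, simp_all)
qed

lemma mcoef_trailing_zeros_snoc:
  assumes "0 < x" and "0 < y" and "0 < z"
  shows "mcoef (X @ [x] @ replicate a 0) (Y @ [y] @ replicate b 0) (V @ [z]) =
      of_bool (x = z \<and> a = 0) * (\<Sum>e\<le>min 1 b. mcoef X (Y @ [y] @ replicate (b - e) 0) V)
    + of_bool (y = z \<and> b = 0) * (\<Sum>e\<le>min 1 a. mcoef (X @ [x] @ replicate (a - e) 0) Y V)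
    + of_bool (x + y = z \<and> a = 0 \<and> b = 0) * mcoef X Y V"
  using assms
  by (cases a; cases b) (simp_all only: append_snoc_replicate_Suc append_Nil2 replicate_0 mcoef_snoc_snoc,
      simp_all add: atMost_Suc replicate_append_same)

text \<open>The multiplicity of u_0^n in u_0^x * u_0^y: choose which x of the n letters come from the
  first factor, then which x + y - n of those are merged with a letter of the second.\<close>

definition zero_word_mult :: "nat \<Rightarrow> nat \<Rightarrow> nat \<Rightarrow> nat" where
  "zero_word_mult x y n = (if n \<le> x + y then (n choose x) * (x choose (x + y - n)) else 0)"

lemma zero_word_mult_0: "zero_word_mult x y 0 = of_bool (x = 0 \<and> y = 0)"
  by (simp add: zero_word_mult_def binomial_eq_0)

lemma zero_word_mult_Suc_Suc_Suc:
  "zero_word_mult (Suc p) (Suc q) (Suc n)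
    = zero_word_mult p (Suc q) n + zero_word_mult (Suc p) q n + zero_word_mult p q n"
proof (cases "n \<le> p + q + 1")
  case True
  then obtain m where m: "p + q + 1 = n + m"
    using le_Suc_ex by blast
  show ?thesis
  proof (cases m)
    case 0
    then show ?thesis
      using m by (simp add: zero_word_mult_def)
  next
    case (Suc m')
    have "p + q - n = m'"
      using m Suc by simp
    then show ?thesis
      using m Suc by (simp add: zero_word_mult_def algebra_simps)
  qed
next
  case False
  then show ?thesis
    by (simp add: zero_word_mult_def)
qed

lemma zero_word_mult_0_left: "zero_word_mult 0 y n = of_bool (n = y)"
  by (simp add: zero_word_mult_def)

lemma zero_word_mult_0_right: "zero_word_mult x 0 n = of_bool (n = x)"
  by (auto simp: zero_word_mult_def binomial_eq_0)

lemma trailing_zero_recurrence_zero_word_mult: "trailing_zero_recurrence zero_word_mult"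
  unfolding trailing_zero_recurrence_def
proof (intro allI)
  fix a b n
  show "zero_word_mult a b (Suc n) =
      (if 0 < a then zero_word_mult (a - 1) b n else 0)
    + (if 0 < b then zero_word_mult a (b - 1) n else 0)
    + (if 0 < a \<and> 0 < b then zero_word_mult (a - 1) (b - 1) n else 0)"
    by (cases a; cases b)
      (simp_all add: zero_word_mult_0_left zero_word_mult_0_right zero_word_mult_Suc_Suc_Suc)
qed

lemma zero_word_mult_eq_sum:
  "zero_word_mult p j t = (\<Sum>k\<le>j. ((p + k) choose p) * (p choose (j - k)) * of_bool (p + k = t))"
proof -
  have "(\<Sum>k\<le>j. ((p + k) choose p) * (p choose (j - k)) * of_bool (p + k = t))
      = (\<Sum>k\<le>j. if k = t - p then of_bool (p \<le> t) * (t choose p) * (p choose (j - k)) else 0)"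
    by (intro sum.cong) auto
  also have "\<dots> = zero_word_mult p j t"
    by (auto simp: zero_word_mult_def binomial_eq_0 add.commute[of j])
  finally show ?thesis ..
qed

lemma sum_triple_index_set_nested:
  fixes g :: "nat \<Rightarrow> nat \<Rightarrow> nat \<Rightarrow> 'a::comm_monoid_add"
  shows "(\<Sum>(k, j, e) \<in> {(k, j, e). k \<le> j \<and> j \<le> q \<and> e \<le> min 1 (q - j)}. g k j e)
    = (\<Sum>j\<le>q. \<Sum>k\<le>j. \<Sum>e\<le>min 1 (q - j). g k j e)"
proof -
  have "(\<Sum>(k, j, e) \<in> {(k, j, e). k \<le> j \<and> j \<le> q \<and> e \<le> min 1 (q - j)}. g k j e)
      = (\<Sum>(j, k, e) \<in> (SIGMA j:{..q}. {..j} \<times> {..min 1 (q - j)}). g k j e)"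
    by (rule sum.reindex_bij_witness[where i="\<lambda>(j, k, e). (k, j, e)" and j="\<lambda>(k, j, e). (j, k, e)"])
      auto
  also have "\<dots> = (\<Sum>j\<le>q. \<Sum>k\<le>j. \<Sum>e\<le>min 1 (q - j). g k j e)"
    by (simp add: sum.Sigma[symmetric] sum.cartesian_product[symmetric])
  finally show ?thesis .
qed

lemma sum_triple_choose_eq_zero_word_mult:
  fixes g :: "nat \<Rightarrow> nat \<Rightarrow> nat"
  shows "(\<Sum>(k, j, e) \<in> {(k, j, e). k \<le> j \<and> j \<le> q \<and> e \<le> min 1 (q - j)}.
      ((p + k) choose p) * (p choose (j - k)) * g j e * of_bool P * of_bool (p + k = t))
    = of_bool P * (\<Sum>j\<le>q. zero_word_mult p j t * (\<Sum>e\<le>min 1 (q - j). g j e))"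
  unfolding sum_triple_index_set_nested
  by (simp only: zero_word_mult_eq_sum sum_product sum_distrib_left mult_ac)

lemma sum_choose_eq_zero_word_mult:
  "(\<Sum>k = 0..q. ((p + k) choose p) * (p choose (q - k)) * M * of_bool P * of_bool (p + k = t))
    = of_bool P * M * zero_word_mult p q t"
proof -
  have "(\<Sum>k = 0..q. ((p + k) choose p) * (p choose (q - k)) * M * of_bool P * of_bool (p + k = t))
      = (\<Sum>k\<le>q. ((p + k) choose p) * (p choose (q - k)) * of_bool (p + k = t)) * (of_bool P * M)"
    by (simp only: atLeast0AtMost sum_distrib_right) (simp add: mult_ac)
  then show ?thesis
    by (simp add: zero_word_mult_eq_sum)
qed

lemma mcoef_append_trailing_zeros:
  assumes pos: "0 < j1" "0 < j2" "0 < j3"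
  shows "mcoef (W1 @ [j1] @ replicate n1 0) (W2 @ [j2] @ replicate n2 0) (W @ [j3] @ replicate n3 0)
    = of_bool (j1 = j3) * (\<Sum>j\<le>n2. zero_word_mult n1 j n3 *
        (\<Sum>e\<le>min 1 (n2 - j). mcoef W1 (W2 @ [j2] @ replicate (n2 - j - e) 0) W))
    + of_bool (j2 = j3) * (\<Sum>j\<le>n1. zero_word_mult n2 j n3 *
        (\<Sum>e\<le>min 1 (n1 - j). mcoef (W1 @ [j1] @ replicate (n1 - j - e) 0) W2 W))
    + of_bool (j1 + j2 = j3) * mcoef W1 W2 W * zero_word_mult n1 n2 n3"
proof -
  define g1 where "g1 s = (\<Sum>e\<le>min 1 s. mcoef W1 (W2 @ [j2] @ replicate (s - e) 0) W)" for s
  define g2 where "g2 s = (\<Sum>e\<le>min 1 s. mcoef (W1 @ [j1] @ replicate (s - e) 0) W2 W)" for s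
  define F where "F a b n =
      of_bool (j1 = j3) * (\<Sum>r\<le>b. zero_word_mult a r n * g1 (b - r))
    + of_bool (j2 = j3) * (\<Sum>r\<le>a. zero_word_mult b r n * g2 (a - r))
    + of_bool (j1 + j2 = j3) * mcoef W1 W2 W * zero_word_mult a b n" for a b n
  have conv: "trailing_zero_recurrence (\<lambda>a b n. \<Sum>r\<le>b. zero_word_mult a r n * g (b - r))" for g
    by (rule trailing_zero_recurrence_convolution[OF trailing_zero_recurrence_zero_word_mult])
  have "trailing_zero_recurrence (\<lambda>a b n. mcoef (W1 @ [j1] @ replicate a 0)
      (W2 @ [j2] @ replicate b 0) ((W @ [j3]) @ replicate n 0))"
    using pos by (intro trailing_zero_recurrence_mcoef)
  moreover have "trailing_zero_recurrence F"
    unfolding F_def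
    by (intro trailing_zero_recurrence_add trailing_zero_recurrence_scale conv
        trailing_zero_recurrence_swap[OF conv] trailing_zero_recurrence_zero_word_mult)
  moreover have "mcoef (W1 @ [j1] @ replicate a 0) (W2 @ [j2] @ replicate b 0)
      ((W @ [j3]) @ replicate 0 0) = F a b 0" for a b
    using mcoef_trailing_zeros_snoc[OF pos, of W1 a W2 b W]
    by (simp add: F_def g1_def g2_def zero_word_mult_0)
  ultimately have "mcoef (W1 @ [j1] @ replicate n1 0) (W2 @ [j2] @ replicate n2 0)
      ((W @ [j3]) @ replicate n3 0) = F n1 n2 n3"
    by (rule trailing_zero_recurrence_eqI)
  then show ?thesis
    by (simp add: F_def g1_def g2_def)
qed

theorem proposition2p3:
  fixes W1 W2 W :: "nat list"
  assumes "W1 \<in> Ucirc" and "W2 \<in> Ucirc" and "W \<in> Ucirc"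
  shows "(W1 = [] \<longrightarrow> mcoef W1 W2 W = of_bool (W = W2))
    \<and> (W2 = [] \<longrightarrow> mcoef W1 W2 W = of_bool (W = W1))
    \<and> (W = [] \<longrightarrow> mcoef W1 W2 W = of_bool (W1 = [] \<and> W2 = []))
    \<and> (\<forall>W1' j1 n1 W2' j2 n2 W' j3 n3.
         W1' \<in> Ucirc \<longrightarrow> W2' \<in> Ucirc \<longrightarrow> W' \<in> Ucirc \<longrightarrow>
         (j1::nat) > 0 \<longrightarrow> (j2::nat) > 0 \<longrightarrow> (j3::nat) > 0 \<longrightarrow>
         W1 = W1' @ [j1] @ replicate n1 0 \<longrightarrow>
         W2 = W2' @ [j2] @ replicate n2 0 \<longrightarrow>
         W = W' @ [j3] @ replicate n3 0 \<longrightarrow>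
         mcoef W1 W2 W =
           (\<Sum>(k, j, e) \<in> {(k, j, e). k \<le> j \<and> j \<le> n2 \<and> e \<le> min 1 (n2 - j)}.
              ((n1 + k) choose n1) * (n1 choose (j - k))
              * mcoef W1' (W2' @ [j2] @ replicate (n2 - j - e) 0) W'
              * of_bool (j1 = j3) * of_bool (n1 + k = n3))
         + (\<Sum>(k, j, e) \<in> {(k, j, e). k \<le> j \<and> j \<le> n1 \<and> e \<le> min 1 (n1 - j)}.
              ((n2 + k) choose n2) * (n2 choose (j - k))
              * mcoef (W1' @ [j1] @ replicate (n1 - j - e) 0) W2' W'
              * of_bool (j2 = j3) * of_bool (n2 + k = n3))
         + (\<Sum>k = 0..n2.
              ((n1 + k) choose n1) * (n1 choose (n2 - k))
              * mcoef W1' W2' W'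
              * of_bool (j1 + j2 = j3) * of_bool (n1 + k = n3)))"
proof (intro conjI allI impI)
  show "W1 = [] \<Longrightarrow> mcoef W1 W2 W = of_bool (W = W2)"
    by (simp add: mcoef_def)
  show "W2 = [] \<Longrightarrow> mcoef W1 W2 W = of_bool (W = W1)"
    by (simp add: mcoef_def)
  show "W = [] \<Longrightarrow> mcoef W1 W2 W = of_bool (W1 = [] \<and> W2 = [])"
    by (simp add: mcoef_def count_stuffle_Nil)
qed (simp only: mcoef_append_trailing_zeros sum_triple_choose_eq_zero_word_mult
    sum_choose_eq_zero_word_mult)

end
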